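(* Let $0<\eta<1/20$ and $K\ge1/\eta$. Let $G$ be a $(1-\eta)$-complete graph on a vertex set $V$ with $|V|=K$, let $W\subseteq V$ satisfy $|W|,|V\setminus W|\ge 4\eta^{1/2}K$, and let $G_W$ be obtained from $G$ by deleting all edges with both endpoints in $W$. Suppose each edge of $G_W$ is coloured red or blue, and let $F$ be a largest monochromatic connected component of $G_W$. Define $W_r=\{w\in W: w \text{ is joined by red edges to all but at most } 3\eta^{1/2}K \text{ vertices of } V\setminus W\}$ and $W_b=\{w\in W: w \text{ is joined by blue edges to all but at most } 3\eta^{1/2}K \text{ vertices of } V\setminus W\}$. Then $|F|\ge(1-2\eta^{1/2})K$ or both $W_r$ and $W_b$ are nonempty.
   Context: A graph on $K$ vertices is $(1-\eta)$-complete if its minimum degree is at least $(1-\eta)(K-1)$. A monochromatic component is a connected component of the subgraph formed by the red edges or of the subgraph formed by the blue edges. *)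

theory Defs
  imports Complex_Main
begin

definition simple_graph :: "'a set \<Rightarrow> 'a set set \<Rightarrow> bool" where
  "simple_graph V E \<longleftrightarrow> finite V \<and> (\<forall>e\<in>E. e \<subseteq> V \<and> card e = 2)"

definition degree :: "'a set \<Rightarrow> 'a set set \<Rightarrow> 'a \<Rightarrow> nat" where
  "degree V E v = card {u \<in> V. {v, u} \<in> E}"

definition almost_complete :: "real \<Rightarrow> 'a set \<Rightarrow> 'a set set \<Rightarrow> bool" where
  "almost_complete eta V E \<longleftrightarrow>
     (\<forall>v\<in>V. real (degree V E v) \<ge> (1 - eta) * (real (card V) - 1))"

definition component_of :: "'a set \<Rightarrow> 'a set set \<Rightarrow> 'a \<Rightarrow> 'a set" where
  "component_of V C v = {u \<in> V. (\<lambda>x y. {x, y} \<in> C)\<^sup>*\<^sup>* v u}"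

definition is_component :: "'a set \<Rightarrow> 'a set set \<Rightarrow> 'a set \<Rightarrow> bool" where
  "is_component V C S \<longleftrightarrow> (\<exists>v\<in>V. S = component_of V C v)"

definition mono_component :: "'a set \<Rightarrow> 'a set set \<Rightarrow> 'a set set \<Rightarrow> 'a set \<Rightarrow> bool" where
  "mono_component V R B S \<longleftrightarrow> is_component V R S \<or> is_component V B S"

end

theory Submission
  imports Defs
begin

text \<open>Write \<open>d = \<eta>(K - 1)\<close> for the maximal number of non-neighbours of a vertex. Suppose \<open>W\<^sub>r = {}\<close>,
so every \<open>w \<in> W\<close> has more than \<open>2d\<close> blue neighbours in \<open>V - W\<close>. An edge of \<open>G\<close> that is not
inside \<open>W\<close> and joins two different blue components must be red. If \<open>W\<close> lies in a single blue
component \<open>C \<noteq> V\<close>, then \<open>|C| > 2d\<close> and any \<open>x \<notin> C\<close> is red-linked to all vertices outside \<open>C\<close>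
(through a common neighbour in \<open>C\<close>) and to its neighbours in \<open>C\<close>, i.e. to all but \<open>d\<close> vertices.
If \<open>w\<^sub>1, w\<^sub>2 \<in> W\<close> lie in different blue components \<open>C\<^sub>1, C\<^sub>2\<close>, their blue neighbourhoods
\<open>B\<^sub>1, B\<^sub>2\<close> in \<open>V - W\<close> have size \<open>> 2d\<close>, so all vertices outside \<open>C\<^sub>2\<close> are red-linked through
\<open>B\<^sub>2\<close>, and every vertex of \<open>C\<^sub>2\<close> has a red neighbour in \<open>B\<^sub>1\<close>: the red graph is connected.
Either way there is a monochromatic component of size \<open>\<ge> K - d \<ge> (1 - 2\<eta>\<^sup>1\<^sup>/\<^sup>2)K\<close>.
The case \<open>W\<^sub>b = {}\<close> is symmetric.\<close>

abbreviation linked :: "'a set set \<Rightarrow> 'a \<Rightarrow> 'a \<Rightarrow> bool" where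
  "linked C \<equiv> (\<lambda>x y. {x, y} \<in> C)\<^sup>*\<^sup>*"

lemma linked_edge: "{x, y} \<in> C \<Longrightarrow> linked C x y"
  by (rule r_into_rtranclp) simp

lemma linked_sym:
  assumes "linked C x y"
  shows "linked C y x"
  using assms
proof (induction rule: rtranclp_induct)
  case (step y z)
  then have "{z, y} \<in> C" by (simp add: insert_commute)
  then show ?case using step.IH by (rule converse_rtranclp_into_rtranclp)
qed simp

lemma mem_component_of_iff: "u \<in> component_of V C v \<longleftrightarrow> u \<in> V \<and> linked C v u"
  by (simp add: component_of_def)

lemma component_of_subset: "component_of V C v \<subseteq> V"
  by (auto simp: component_of_def)

lemma not_linked_out_of_component:
  assumes "y \<in> component_of V C w" and "z \<in> V - component_of V C w"
  shows "\<not> linked C y z"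
  using assms by (auto simp: mem_component_of_iff intro: rtranclp_trans)

lemma component_of_disjoint:
  assumes "\<not> linked C w1 w2"
  shows "component_of V C w1 \<inter> component_of V C w2 = {}"
proof (rule ccontr)
  assume "component_of V C w1 \<inter> component_of V C w2 \<noteq> {}"
  then obtain x where "linked C w1 x" "linked C w2 x" by (auto simp: mem_component_of_iff)
  then have "linked C w1 w2" by (blast intro: rtranclp_trans linked_sym)
  with assms show False ..
qed

lemma almost_complete_nonadjacent_le:
  assumes "simple_graph V E" and "almost_complete eta V E" and "v \<in> V"
  shows "real (card {u \<in> V - {v}. {v, u} \<notin> E}) \<le> eta * (real (card V) - 1)"
proof -
  have fin: "finite (V - {v})" using assms(1) by (simp add: simple_graph_def)
  let ?N = "{u \<in> V. {v, u} \<in> E}"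
  have N_sub: "?N \<subseteq> V - {v}"
    using assms(1) by (fastforce simp: simple_graph_def)
  then have "{u \<in> V - {v}. {v, u} \<notin> E} = (V - {v}) - ?N" by blast
  then have "card {u \<in> V - {v}. {v, u} \<notin> E} = card (V - {v}) - card ?N"
    using N_sub fin by (simp add: card_Diff_subset finite_subset)
  moreover have "card ?N \<le> card (V - {v})" using N_sub fin by (rule card_mono[rotated])
  moreover have "card (V - {v}) = card V - 1" "card V \<ge> 1"
    using assms(3) fin by (auto simp: Suc_le_eq card_gt_0_iff)
  moreover have "real (card ?N) \<ge> (1 - eta) * (real (card V) - 1)"
    using assms(2,3) by (simp add: almost_complete_def degree_def)
  ultimately show ?thesis by (simp add: of_nat_diff algebra_simps)
qed

locale two_colouring =
  fixes V W :: "'a set" and E R B :: "'a set set" and d :: real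
  assumes finite_V: "finite V"
    and W_subset: "W \<subseteq> V"
    and colouring: "R \<union> B = {e \<in> E. \<not> e \<subseteq> W}"
    and nonadjacent_le: "\<And>v. v \<in> V \<Longrightarrow> real (card {u \<in> V - {v}. {v, u} \<notin> E}) \<le> d"
    and d_nonneg: "0 \<le> d"
begin

lemma swap_colours: "two_colouring V W E B R d"
  using finite_V W_subset colouring nonadjacent_le d_nonneg
  by unfold_locales (simp_all add: Un_commute)

lemma card_nonadjacent_le:
  assumes "v \<in> V" and "S \<subseteq> V" and "v \<notin> S"
  shows "real (card {u \<in> S. {v, u} \<notin> E}) \<le> d"
proof -
  have "card {u \<in> S. {v, u} \<notin> E} \<le> card {u \<in> V - {v}. {v, u} \<notin> E}"
    using assms finite_V by (intro card_mono) auto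
  then show ?thesis using nonadjacent_le[OF assms(1)] by linarith
qed

lemma exists_adjacent:
  assumes "v \<in> V" and "S \<subseteq> V" and "v \<notin> S" and "real (card S) > d"
  shows "\<exists>u\<in>S. {v, u} \<in> E"
proof (rule ccontr)
  assume "\<not> ?thesis"
  then have "{u \<in> S. {v, u} \<notin> E} = S" by auto
  then show False using card_nonadjacent_le[OF assms(1-3)] assms(4) by simp
qed

lemma exists_common_adjacent:
  assumes "v1 \<in> V - S" and "v2 \<in> V - S" and "S \<subseteq> V" and "real (card S) > 2 * d"
  shows "\<exists>u\<in>S. {v1, u} \<in> E \<and> {v2, u} \<in> E"
proof (rule ccontr)
  assume "\<not> ?thesis"
  then have "S \<subseteq> {u \<in> S. {v1, u} \<notin> E} \<union> {u \<in> S. {v2, u} \<notin> E}" by auto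
  then have "card S \<le> card ({u \<in> S. {v1, u} \<notin> E} \<union> {u \<in> S. {v2, u} \<notin> E})"
    using assms(3) finite_V by (intro card_mono) (auto intro: finite_subset)
  also have "\<dots> \<le> card {u \<in> S. {v1, u} \<notin> E} + card {u \<in> S. {v2, u} \<notin> E}"
    by (rule card_Un_le)
  finally show False
    using card_nonadjacent_le[of v1 S] card_nonadjacent_le[of v2 S] assms by auto
qed

lemma red_if_not_blue_linked:
  assumes "{x, y} \<in> E" and "\<not> {x, y} \<subseteq> W" and "\<not> linked B x y"
  shows "{x, y} \<in> R"
  using assms colouring linked_edge[of x y B] by blast

lemma card_not_red_le:
  assumes "w \<in> W"
  shows "real (card {u \<in> V - W. {w, u} \<notin> R}) \<le> real (card {u \<in> V - W. {w, u} \<in> B}) + d"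
proof -
  have "card {u \<in> V - W. {w, u} \<notin> R}
      \<le> card ({u \<in> V - W. {w, u} \<in> B} \<union> {u \<in> V - W. {w, u} \<notin> E})"
    using colouring finite_V by (intro card_mono) auto
  also have "\<dots> \<le> card {u \<in> V - W. {w, u} \<in> B} + card {u \<in> V - W. {w, u} \<notin> E}"
    by (rule card_Un_le)
  finally show ?thesis
    using card_nonadjacent_le[of w "V - W"] assms W_subset by auto
qed

lemma exists_red_neighbour:
  assumes z: "z \<in> V - component_of V B w"
    and S: "S \<subseteq> component_of V B w" "real (card S) > d"
    and off_W: "\<And>y. y \<in> S \<Longrightarrow> \<not> {z, y} \<subseteq> W"
  shows "\<exists>y\<in>S. {z, y} \<in> R"
proof -
  have SV: "S \<subseteq> V" using order_trans[OF S(1) component_of_subset] .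
  obtain y where y: "y \<in> S" "{z, y} \<in> E"
    using exists_adjacent[of z S] z S SV by auto
  have "\<not> linked B y z" using not_linked_out_of_component[of y V B w z] y(1) S(1) z by blast
  then have "\<not> linked B z y" using linked_sym[of B z y] by blast
  then show ?thesis using y off_W red_if_not_blue_linked by blast
qed

lemma red_linked_outside_blue_component:
  assumes z: "z1 \<in> V - component_of V B w" "z2 \<in> V - component_of V B w"
    and S: "S \<subseteq> component_of V B w" "real (card S) > 2 * d"
    and off_W: "\<And>z y. z \<in> {z1, z2} \<Longrightarrow> y \<in> S \<Longrightarrow> \<not> {z, y} \<subseteq> W"
  shows "linked R z1 z2"
proof -
  have SV: "S \<subseteq> V" using order_trans[OF S(1) component_of_subset] .
  obtain y where y: "y \<in> S" "{z1, y} \<in> E" "{z2, y} \<in> E"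
    using exists_common_adjacent[of z1 S z2] z S SV by auto
  have not_linked: "\<not> linked B z y" if "z \<in> {z1, z2}" for z
  proof -
    have "\<not> linked B y z" using not_linked_out_of_component[of y V B w z] y(1) S(1) z that by blast
    then show ?thesis using linked_sym[of B z y] by blast
  qed
  have red: "{z, y} \<in> R" if "z \<in> {z1, z2}" for z
  proof (rule red_if_not_blue_linked)
    show "{z, y} \<in> E" using y that by auto
  qed (use off_W[OF that y(1)] not_linked[OF that] in auto)
  show ?thesis
    using rtranclp_trans[OF linked_edge[OF red] linked_sym[OF linked_edge[OF red]]] by simp
qed

lemma large_red_component_if_W_in_blue_component:
  assumes w: "w \<in> W" and W_C: "W \<subseteq> component_of V B w"
    and C_ne: "component_of V B w \<noteq> V" and "real (card W) > 2 * d"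
  shows "\<exists>x\<in>V. real (card (component_of V R x)) \<ge> real (card V) - d"
proof -
  let ?C = "component_of V B w"
  obtain x where x: "x \<in> V - ?C" using C_ne component_of_subset[of V B w] by blast
  then have xW: "x \<notin> W" using W_C by blast
  have card_C: "real (card ?C) > 2 * d"
    using card_mono[OF finite_subset[OF component_of_subset[of V B w] finite_V] W_C] assms(4) by linarith
  define N where "N = {y \<in> ?C. {x, y} \<notin> E}"
  have "V - N \<subseteq> component_of V R x"
  proof
    fix z assume z: "z \<in> V - N"
    have "linked R x z"
    proof (cases "z \<in> ?C")
      case True
      then have "{x, z} \<in> E" using z by (simp add: N_def)
      moreover have "\<not> linked B x z"
        using not_linked_out_of_component[OF True x] linked_sym[of B x z] by blast
      ultimately show ?thesis using xW red_if_not_blue_linked linked_edge by blast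
    next
      case False
      then have "z \<notin> W" using W_C by blast
      then show ?thesis
        using red_linked_outside_blue_component[OF x, of z ?C] False z xW card_C by auto
    qed
    then show "z \<in> component_of V R x" using z by (simp add: mem_component_of_iff)
  qed
  then have "card (V - N) \<le> card (component_of V R x)"
    by (rule card_mono[OF finite_subset[OF component_of_subset finite_V]])
  moreover have "card V \<le> card (V - N) + card N"
  proof -
    have "N \<subseteq> V" using component_of_subset[of V B w] by (auto simp: N_def)
    then show ?thesis using finite_V by (simp add: card_Diff_subset finite_subset card_mono)
  qed
  moreover have "real (card N) \<le> d"
    unfolding N_def using card_nonadjacent_le[of x ?C] x component_of_subset[of V B w] by blast
  ultimately have "real (card V) - d \<le> real (card (component_of V R x))" by linarith
  then show ?thesis using x by blast
qed

lemma red_spanning_if_W_blue_disconnected: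
  assumes w: "w1 \<in> W" "w2 \<in> W" "\<not> linked B w1 w2"
    and blue_nbrs: "\<And>w. w \<in> W \<Longrightarrow> real (card {u \<in> V - W. {w, u} \<in> B}) > 2 * d"
  shows "\<exists>u\<in>V. component_of V R u = V"
proof -
  define B1 where "B1 = {u \<in> V - W. {w1, u} \<in> B}"
  define B2 where "B2 = {u \<in> V - W. {w2, u} \<in> B}"
  let ?C1 = "component_of V B w1" and ?C2 = "component_of V B w2"
  have B1: "B1 \<subseteq> ?C1" "B1 \<inter> W = {}" "real (card B1) > 2 * d"
    using blue_nbrs[OF w(1)] by (auto simp: B1_def mem_component_of_iff intro: linked_edge)
  have B2: "B2 \<subseteq> ?C2" "B2 \<inter> W = {}" "real (card B2) > 2 * d"
    using blue_nbrs[OF w(2)] by (auto simp: B2_def mem_component_of_iff intro: linked_edge)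
  have disj: "?C1 \<inter> ?C2 = {}" using component_of_disjoint[OF w(3)] .
  have "B1 \<noteq> {}" using B1(3) d_nonneg by auto
  then obtain u where u: "u \<in> B1" by blast
  have u_out: "u \<in> V - ?C2" using u B1(1) disj component_of_subset[of V B w1] by blast
  have outside_C2: "linked R u z" if "z \<in> V - ?C2" for z
    using red_linked_outside_blue_component[OF u_out that B2(1,3)] B2(2) by blast
  have "linked R u z" if z: "z \<in> V" for z
  proof (cases "z \<in> ?C2")
    case True
    then have "z \<in> V - ?C1" using disj z by blast
    have "\<exists>y\<in>B1. {z, y} \<in> R"
    proof (rule exists_red_neighbour[OF \<open>z \<in> V - ?C1\<close> B1(1)])
      show "real (card B1) > d" using B1(3) d_nonneg by simp
      show "\<not> {z, y} \<subseteq> W" if "y \<in> B1" for y using that B1(2) by blast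
    qed
    then obtain y where y: "y \<in> B1" "{z, y} \<in> R" by blast
    have "linked R u y" using outside_C2 y(1) B1(1) disj component_of_subset[of V B w1] by blast
    then show ?thesis using rtranclp_trans[OF _ linked_sym[OF linked_edge[OF y(2)]]] by blast
  qed (use outside_C2 z in blast)
  then have "component_of V R u = V" by (auto simp: component_of_def)
  then show ?thesis using u_out by blast
qed

lemma large_mono_component_if_blue_nbrs_large:
  assumes "real (card W) > 2 * d"
    and blue_nbrs: "\<And>w. w \<in> W \<Longrightarrow> real (card {u \<in> V - W. {w, u} \<in> B}) > 2 * d"
  shows "\<exists>S. mono_component V R B S \<and> real (card S) \<ge> real (card V) - d"
proof -
  obtain w where w: "w \<in> W" using assms(1) d_nonneg by fastforce
  have "\<exists>v\<in>V. real (card (component_of V R v)) \<ge> real (card V) - d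
              \<or> real (card (component_of V B v)) \<ge> real (card V) - d"
  proof (cases "\<forall>w'\<in>W. linked B w w'")
    case True
    then have W_C: "W \<subseteq> component_of V B w" using W_subset by (auto simp: mem_component_of_iff)
    show ?thesis
    proof (cases "component_of V B w = V")
      case True
      then have "real (card (component_of V B w)) \<ge> real (card V) - d" using d_nonneg by simp
      then show ?thesis using w W_subset by blast
    qed (use large_red_component_if_W_in_blue_component[OF w W_C] assms(1) in blast)
  next
    case False
    then obtain w' where "w' \<in> W" "\<not> linked B w w'" by blast
    then obtain u where "u \<in> V" "component_of V R u = V"
      using red_spanning_if_W_blue_disconnected[OF w] blue_nbrs by blast
    then have "real (card V) - d \<le> real (card (component_of V R u))" using d_nonneg by simp
    then show ?thesis using \<open>u \<in> V\<close> by blast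
  qed
  then show ?thesis by (auto simp: mono_component_def is_component_def)
qed

lemma large_mono_component_if_red_sparse:
  assumes "real (card W) > 2 * d"
    and not_red: "\<And>w. w \<in> W \<Longrightarrow> real (card {u \<in> V - W. {w, u} \<notin> R}) > 3 * d"
  shows "\<exists>S. mono_component V R B S \<and> real (card S) \<ge> real (card V) - d"
proof (rule large_mono_component_if_blue_nbrs_large[OF assms(1)])
  fix w assume "w \<in> W"
  then show "real (card {u \<in> V - W. {w, u} \<in> B}) > 2 * d"
    using card_not_red_le not_red by fastforce
qed

lemma large_mono_component_or_both_dominant:
  assumes card_W: "real (card W) > 2 * d" and "3 * d \<le> t"
  shows "(\<exists>S. mono_component V R B S \<and> real (card V) - d \<le> real (card S))
    \<or> ({w \<in> W. real (card {u \<in> V - W. {w, u} \<notin> R}) \<le> t} \<noteq> {}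
       \<and> {w \<in> W. real (card {u \<in> V - W. {w, u} \<notin> B}) \<le> t} \<noteq> {})"
proof -
  interpret swapped: two_colouring V W E B R d by (rule swap_colours)
  have "\<exists>S. mono_component V R B S \<and> real (card V) - d \<le> real (card S)"
    if "\<forall>w\<in>W. real (card {u \<in> V - W. {w, u} \<notin> R}) > t"
    using large_mono_component_if_red_sparse[OF card_W] that assms(2) by force
  moreover have "\<exists>S. mono_component V R B S \<and> real (card V) - d \<le> real (card S)"
    if "\<forall>w\<in>W. real (card {u \<in> V - W. {w, u} \<notin> B}) > t"
  proof -
    have "\<forall>w\<in>W. real (card {u \<in> V - W. {w, u} \<notin> B}) > 3 * d" using that assms(2) by force
    then obtain S where "mono_component V B R S" "real (card V) - d \<le> real (card S)"
      using swapped.large_mono_component_if_red_sparse[OF card_W] by blast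
    then show ?thesis by (auto simp: mono_component_def)
  qed
  ultimately show ?thesis by (auto simp: not_le)
qed
end

theorem lemma7p18:
  fixes V W :: "'a set" and E R B :: "'a set set" and eta :: real and K :: nat
    and F :: "'a set"
  assumes "0 < eta" and "eta < 1/20" and "real K \<ge> 1 / eta"
    and "simple_graph V E" and "card V = K"
    and "almost_complete eta V E"
    and "W \<subseteq> V"
    and "real (card W) \<ge> 4 * sqrt eta * real K"
    and "real (card (V - W)) \<ge> 4 * sqrt eta * real K"
    and "R \<union> B = {e \<in> E. \<not> e \<subseteq> W}" and "R \<inter> B = {}"
    and "mono_component V R B F"
    and "\<forall>S. mono_component V R B S \<longrightarrow> card S \<le> card F"
  shows "real (card F) \<ge> (1 - 2 * sqrt eta) * real K
    \<or> ({w \<in> W. real (card {u \<in> V - W. {w, u} \<notin> R}) \<le> 3 * sqrt eta * real K} \<noteq> {}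
       \<and> {w \<in> W. real (card {u \<in> V - W. {w, u} \<notin> B}) \<le> 3 * sqrt eta * real K} \<noteq> {})"
proof -
  define d where "d = eta * (real K - 1)"
  have "real K > 0" using assms(1,3) by (smt (verit) zero_less_divide_1_iff)
  then have "real K \<ge> 1" by (simp add: Suc_le_eq)
  have "eta \<le> sqrt eta" using assms(1,2) by (intro real_le_rsqrt) (simp add: power2_eq_square)
  then have "eta * real K \<le> sqrt eta * real K" by (rule mult_right_mono) simp
  then have d_le: "d < sqrt eta * real K" using assms(1) by (simp add: d_def algebra_simps)
  have "0 \<le> d" using assms(1) \<open>real K \<ge> 1\<close> by (simp add: d_def)
  moreover have "real (card {u \<in> V - {v}. {v, u} \<notin> E}) \<le> d" if "v \<in> V" for v
    using almost_complete_nonadjacent_le[OF assms(4,6) that] assms(5) by (simp add: d_def)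
  ultimately interpret two_colouring V W E R B d
    using assms(4,7,10) by unfold_locales (simp_all add: simple_graph_def)
  have card_W: "real (card W) > 2 * d" using assms(8) d_le by linarith
  have "3 * d \<le> 3 * sqrt eta * real K" using d_le by linarith
  from large_mono_component_or_both_dominant[OF card_W this]
  show ?thesis
  proof (elim disjE exE conjE)
    fix S assume "mono_component V R B S" and S: "real (card V) - d \<le> real (card S)"
    then have "card S \<le> card F" using assms(13) by blast
    moreover have "0 \<le> sqrt eta * real K" using assms(1) by simp
    ultimately show ?thesis using S d_le assms(5) by (simp add: algebra_simps)
  qed blast
qed

end
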